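(* Let $G=(V,E)$ be a finite graph and let $Q$ be an admissible random invariant set. For $B \subset V$ and $\mathcal F_B$-measurable $f: \mathcal S_V \to \mathbb R$, $$\mathbb E_V(f \mid \mathcal F_Q)\, \mathbb 1\{Q \cap B = \emptyset\} = \mathbb E_V\big(f\, \mathbb 1\{Q \cap B = \emptyset\} \mid \mathcal F_Q\big) = \mathbb E_{Q^c}\big( f(\cdot \oplus \mathrm{id}) \big)\, \mathbb 1\{Q \cap B = \emptyset\}.$$
   Context: For $U\subset V$, $\mathcal S_U$ is the set of bijections $\pi:U\to U$ with $\pi(x)=x$ or $\{x,\pi(x)\}\in E$; $\mathbb P_U(\pi)=e^{-\alpha\sum_{x\in U}\mathbb 1\{\pi(x)\neq x\}}/Z(U)$ with normalizing constant $Z(U)$, and $\mathbb E_U$ its expectation. For $B\subset V$, $\mathcal F_B$ is the $\sigma$-algebra on $\mathcal S_V$ generated by the values $\pi(x)$ and $\pi^{-1}(x)$, $x\in B$. For $\pi\in\mathcal S_U$, $\pi\oplus\mathrm{id}\in\mathcal S_V$ extends $\pi$ by the identity outside $U$. A set-valued random variable $Q:\mathcal S_V\to\mathcal P(V)$ is an admissible random invariant set if $\pi(Q(\pi))=Q(\pi)$ for all $\pi\in\mathcal S_V$ and the event $\{Q=A\}$ is $\mathcal F_A$-measurable for all $A\subset V$. $\mathcal F_Q=\{R\subset\mathcal S_V: R\cap\{Q=A\}\in\mathcal F_A\text{ for all }A\subset V\}$. $\mathbb E_{Q^c}(\cdot)$ denotes $\mathbb E_{A^c}(\cdot)$ evaluated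 at $A=Q$. *)

theory Defs
  imports "HOL-Probability.Probability"
begin

definition finite_graph :: "'a set \<Rightarrow> 'a set set \<Rightarrow> bool" where
  "finite_graph V E \<longleftrightarrow> finite V \<and>
     (\<forall>e\<in>E. \<exists>x y. e = {x, y} \<and> x \<noteq> y \<and> x \<in> V \<and> y \<in> V)"

text \<open>S_U: bijections of U moving each point along an edge or fixing it.
  Such a bijection is represented by a function on the whole type that is the identity
  outside U (canonical representative).\<close>
definition perms :: "'a set set \<Rightarrow> 'a set \<Rightarrow> ('a \<Rightarrow> 'a) set" where
  "perms E U = {\<pi>. bij_betw \<pi> U U \<and> (\<forall>x. x \<notin> U \<longrightarrow> \<pi> x = x)
                  \<and> (\<forall>x\<in>U. \<pi> x = x \<or> {x, \<pi> x} \<in> E)}"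

definition weight :: "real \<Rightarrow> 'a set \<Rightarrow> ('a \<Rightarrow> 'a) \<Rightarrow> real" where
  "weight \<alpha> U \<pi> = exp (- \<alpha> * (\<Sum>x\<in>U. if \<pi> x \<noteq> x then 1 else 0))"

definition Zc :: "real \<Rightarrow> 'a set set \<Rightarrow> 'a set \<Rightarrow> real" where
  "Zc \<alpha> E U = (\<Sum>\<pi>\<in>perms E U. weight \<alpha> U \<pi>)"

definition Pr :: "real \<Rightarrow> 'a set set \<Rightarrow> 'a set \<Rightarrow> ('a \<Rightarrow> 'a) \<Rightarrow> real" where
  "Pr \<alpha> E U \<pi> = weight \<alpha> U \<pi> / Zc \<alpha> E U"

definition Ex :: "real \<Rightarrow> 'a set set \<Rightarrow> 'a set \<Rightarrow> (('a \<Rightarrow> 'a) \<Rightarrow> real) \<Rightarrow> real" where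
  "Ex \<alpha> E U g = (\<Sum>\<pi>\<in>perms E U. g \<pi> * Pr \<alpha> E U \<pi>)"

definition PV :: "real \<Rightarrow> 'a set set \<Rightarrow> 'a set \<Rightarrow> ('a \<Rightarrow> 'a) measure" where
  "PV \<alpha> E V = point_measure (perms E V) (\<lambda>\<pi>. ennreal (Pr \<alpha> E V \<pi>))"

definition oplus_id :: "'a set \<Rightarrow> ('a \<Rightarrow> 'a) \<Rightarrow> ('a \<Rightarrow> 'a)" where
  "oplus_id U \<pi> = (\<lambda>x. if x \<in> U then \<pi> x else x)"

definition Fgen :: "'a set set \<Rightarrow> 'a set \<Rightarrow> 'a set \<Rightarrow> ('a \<Rightarrow> 'a) set set" where
  "Fgen E V B = {{\<pi> \<in> perms E V. \<pi> x = y} | x y. x \<in> B}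
              \<union> {{\<pi> \<in> perms E V. inv \<pi> x = y} | x y. x \<in> B}"

definition FB :: "'a set set \<Rightarrow> 'a set \<Rightarrow> 'a set \<Rightarrow> ('a \<Rightarrow> 'a) set set" where
  "FB E V B = sigma_sets (perms E V) (Fgen E V B)"

definition admissible :: "'a set set \<Rightarrow> 'a set \<Rightarrow> (('a \<Rightarrow> 'a) \<Rightarrow> 'a set) \<Rightarrow> bool" where
  "admissible E V Q \<longleftrightarrow>
     (\<forall>\<pi>\<in>perms E V. Q \<pi> \<subseteq> V \<and> \<pi> ` Q \<pi> = Q \<pi>) \<and>
     (\<forall>A. A \<subseteq> V \<longrightarrow> {\<pi> \<in> perms E V. Q \<pi> = A} \<in> FB E V A)"

definition FQ :: "'a set set \<Rightarrow> 'a set \<Rightarrow> (('a \<Rightarrow> 'a) \<Rightarrow> 'a set) \<Rightarrow> ('a \<Rightarrow> 'a) set set" where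
  "FQ E V Q = {R. R \<subseteq> perms E V \<and>
                  (\<forall>A. A \<subseteq> V \<longrightarrow> R \<inter> {\<pi> \<in> perms E V. Q \<pi> = A} \<in> FB E V A)}"

end

theory Submission
  imports Defs "HOL-Combinatorics.Permutations"
begin

text \<open>
  On the event \<open>Q = A\<close> the set \<open>A\<close> is invariant, so a permutation \<open>\<pi>\<close> there splits as
  \<open>\<sigma> \<oplus> \<tau>\<close> with \<open>\<sigma> \<in> S\<^sub>A\<close> and \<open>\<tau> \<in> S\<^bsub>V - A\<^esub>\<close>, and the weight factorises accordingly.
  An \<open>\<F>\<^sub>A\<close>-event only constrains \<open>\<sigma>\<close>, while an \<open>\<F>\<^sub>B\<close>-measurable \<open>f\<close> with
  \<open>A \<inter> B = {}\<close> only depends on \<open>\<tau>\<close>. Summing over \<open>\<tau>\<close> first, the integral of \<open>f\<close> over any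
  \<open>\<F>\<^sub>Q\<close>-event inside \<open>{Q = A}\<close> equals \<open>\<EE>\<^bsub>V - A\<^esub>(f(\<cdot> \<oplus> id))\<close> times its probability, which is
  the characterisation of the conditional expectation; the first identity is the usual
  pull-out property for the \<open>\<F>\<^sub>Q\<close>-measurable factor \<open>\<one>{Q \<inter> B = \<emptyset>}\<close>.
\<close>

lemma perms_permutes: "\<pi> \<in> perms E U \<Longrightarrow> \<pi> permutes U"
  unfolding perms_def by (auto intro: bij_imp_permutes)

lemma perms_bij: "\<pi> \<in> perms E U \<Longrightarrow> bij \<pi>"
  using perms_permutes permutes_bij by blast

lemma finite_perms: "finite U \<Longrightarrow> finite (perms E U)"
  by (rule finite_subset[OF _ finite_permutations[of U]]) (auto dest: perms_permutes)

lemma id_in_perms: "id \<in> perms E U"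
  unfolding perms_def by auto

lemma perms_fixes_outside: "\<pi> \<in> perms E U \<Longrightarrow> x \<notin> U \<Longrightarrow> \<pi> x = x"
  unfolding perms_def by auto

lemma oplus_id_perms: "\<pi> \<in> perms E U \<Longrightarrow> oplus_id U \<pi> = \<pi>"
  by (auto simp: oplus_id_def fun_eq_iff perms_fixes_outside)

lemma oplus_id_perms_invariant:
  assumes "\<pi> \<in> perms E V" "A \<subseteq> V" "\<pi> ` A = A"
  shows "oplus_id A \<pi> \<in> perms E A" "oplus_id (V - A) \<pi> \<in> perms E (V - A)"
proof -
  have bij: "bij_betw \<pi> V V" and edges: "\<forall>x\<in>V. \<pi> x = x \<or> {x, \<pi> x} \<in> E"
    using assms(1) unfolding perms_def by auto
  have "inj_on \<pi> A"
    using bij assms(2) by (meson bij_betw_def inj_on_subset)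
  then have "bij_betw \<pi> A A"
    using assms(3) by (simp add: bij_betw_def)
  then have "bij_betw (oplus_id A \<pi>) A A"
    by (rule bij_betw_cong[THEN iffD2, rotated]) (simp add: oplus_id_def)
  then show "oplus_id A \<pi> \<in> perms E A"
    using edges assms(2) unfolding perms_def oplus_id_def by auto
  have "\<pi> ` (V - A) = \<pi> ` V - \<pi> ` A"
    using bij assms(2) inj_on_image_set_diff[of \<pi> V V A] by (auto simp: bij_betw_def)
  then have "\<pi> ` (V - A) = V - A"
    using bij assms(3) by (simp add: bij_betw_def)
  moreover have "inj_on \<pi> (V - A)"
    using bij by (meson bij_betw_def inj_on_subset Diff_subset)
  ultimately have "bij_betw \<pi> (V - A) (V - A)"
    by (simp add: bij_betw_def)
  then have "bij_betw (oplus_id (V - A) \<pi>) (V - A) (V - A)"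
    by (rule bij_betw_cong[THEN iffD2, rotated]) (simp add: oplus_id_def)
  then show "oplus_id (V - A) \<pi> \<in> perms E (V - A)"
    using edges unfolding perms_def oplus_id_def by auto
qed

lemma inv_eq_on_invariant:
  assumes "bij \<pi>" "bij \<pi>'" "\<pi> ` A = A" "\<And>y. y \<in> A \<Longrightarrow> \<pi> y = \<pi>' y" "x \<in> A"
  shows "inv \<pi> x = inv \<pi>' x"
proof -
  have "x \<in> \<pi> ` A"
    using assms(3,5) by simp
  then obtain y where "y \<in> A" "\<pi> y = x"
    by blast
  moreover from this have "\<pi>' y = x"
    using assms(4) by simp
  ultimately show ?thesis
    using inv_f_f[OF bij_is_inj[OF assms(1)], of y] inv_f_f[OF bij_is_inj[OF assms(2)], of y]
    by simp
qed

section \<open>Splitting permutations along an invariant set\<close>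

definition oplus_perm :: "'a set \<Rightarrow> ('a \<Rightarrow> 'a) \<Rightarrow> ('a \<Rightarrow> 'a) \<Rightarrow> 'a \<Rightarrow> 'a" where
  "oplus_perm A \<sigma> \<tau> = (\<lambda>x. if x \<in> A then \<sigma> x else \<tau> x)"

lemma oplus_perm_perms:
  assumes "A \<subseteq> V" "\<sigma> \<in> perms E A" "\<tau> \<in> perms E (V - A)"
  shows "oplus_perm A \<sigma> \<tau> \<in> perms E V"
proof -
  have "bij_betw (oplus_perm A \<sigma> \<tau>) A A"
    using assms(2) unfolding perms_def by (auto simp: oplus_perm_def intro: bij_betw_cong[THEN iffD1])
  moreover have "bij_betw (oplus_perm A \<sigma> \<tau>) (V - A) (V - A)"
    using assms(3) unfolding perms_def by (auto simp: oplus_perm_def intro: bij_betw_cong[THEN iffD1])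
  ultimately have "bij_betw (oplus_perm A \<sigma> \<tau>) (A \<union> (V - A)) (A \<union> (V - A))"
    by (rule bij_betw_combine) auto
  moreover have "A \<union> (V - A) = V"
    using assms(1) by auto
  ultimately show ?thesis
    using assms unfolding perms_def oplus_perm_def by auto
qed

lemma oplus_perm_oplus_id:
  "\<pi> \<in> perms E V \<Longrightarrow> A \<subseteq> V \<Longrightarrow> oplus_perm A (oplus_id A \<pi>) (oplus_id (V - A) \<pi>) = \<pi>"
  by (auto simp: oplus_perm_def oplus_id_def fun_eq_iff perms_fixes_outside)

lemma oplus_id_oplus_perm_left: "\<sigma> \<in> perms E A \<Longrightarrow> oplus_id A (oplus_perm A \<sigma> \<tau>) = \<sigma>"
  by (auto simp: oplus_perm_def oplus_id_def fun_eq_iff perms_fixes_outside)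

lemma oplus_id_oplus_perm_right: "\<tau> \<in> perms E (V - A) \<Longrightarrow> oplus_id (V - A) (oplus_perm A \<sigma> \<tau>) = \<tau>"
  by (auto simp: oplus_perm_def oplus_id_def fun_eq_iff perms_fixes_outside)

lemma oplus_perm_id_left: "\<tau> \<in> perms E (V - A) \<Longrightarrow> oplus_perm A id \<tau> = \<tau>"
  by (auto simp: oplus_perm_def fun_eq_iff perms_fixes_outside)

lemma weight_oplus_perm:
  assumes "finite V" "A \<subseteq> V"
  shows "weight \<alpha> V (oplus_perm A \<sigma> \<tau>) = weight \<alpha> A \<sigma> * weight \<alpha> (V - A) \<tau>"
proof -
  let ?moved = "\<lambda>\<pi> x. if \<pi> x \<noteq> x then 1 else (0::real)"
  have "(\<Sum>x\<in>V. ?moved (oplus_perm A \<sigma> \<tau>) x)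
      = (\<Sum>x\<in>V - A. ?moved (oplus_perm A \<sigma> \<tau>) x) + (\<Sum>x\<in>A. ?moved (oplus_perm A \<sigma> \<tau>) x)"
    using sum.subset_diff[OF assms(2,1)] by simp
  also have "\<dots> = (\<Sum>x\<in>V - A. ?moved \<tau> x) + (\<Sum>x\<in>A. ?moved \<sigma> x)"
    by (intro arg_cong2[where f = "(+)"] sum.cong) (auto simp: oplus_perm_def)
  finally show ?thesis
    unfolding weight_def by (simp add: exp_add[symmetric] algebra_simps)
qed

lemma Zc_pos: "finite U \<Longrightarrow> Zc \<alpha> E U > 0"
  unfolding Zc_def weight_def
  using id_in_perms[of E U] by (intro sum_pos) (auto simp: finite_perms)

lemma Pr_nonneg: "finite U \<Longrightarrow> Pr \<alpha> E U \<pi> \<ge> 0"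
  unfolding Pr_def weight_def using Zc_pos[of U \<alpha> E] by simp

lemma Ex_oplus_id:
  "finite U \<Longrightarrow> Ex \<alpha> E U (\<lambda>\<tau>. f (oplus_id U \<tau>))
     = (\<Sum>\<tau>\<in>perms E U. f \<tau> * weight \<alpha> U \<tau>) / Zc \<alpha> E U"
  unfolding Ex_def Pr_def by (simp add: oplus_id_perms sum_divide_distrib)

section \<open>Events and functions measurable with respect to \<open>\<F>\<^sub>B\<close>\<close>

lemma Fgen_sigma_sets_cong:
  assumes "X \<in> sigma_sets (perms E V) (Fgen E V C)" "\<pi> \<in> perms E V" "\<pi>' \<in> perms E V"
    "\<And>x. x \<in> C \<Longrightarrow> \<pi> x = \<pi>' x \<and> inv \<pi> x = inv \<pi>' x"
  shows "\<pi> \<in> X \<longleftrightarrow> \<pi>' \<in> X"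
  using assms(1)
proof (induction rule: sigma_sets.induct)
  case (Basic a)
  then show ?case using assms(2-4) unfolding Fgen_def by auto
next
  case (Compl a)
  then show ?case using assms(2,3) by auto
qed auto

lemma FB_measurable_cong:
  fixes f :: "('a \<Rightarrow> 'a) \<Rightarrow> real"
  assumes "f \<in> borel_measurable (sigma (perms E V) (FB E V B))"
    "\<pi> \<in> perms E V" "\<pi>' \<in> perms E V"
    "\<And>x. x \<in> B \<Longrightarrow> \<pi> x = \<pi>' x \<and> inv \<pi> x = inv \<pi>' x"
  shows "f \<pi> = f \<pi>'"
proof -
  have Fgen_sub: "Fgen E V B \<subseteq> Pow (perms E V)"
    unfolding Fgen_def by auto
  then have "FB E V B \<subseteq> Pow (perms E V)"
    unfolding FB_def using sigma_sets_into_sp[OF Fgen_sub] by auto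
  moreover have "f -` {f \<pi>} \<inter> space (sigma (perms E V) (FB E V B))
      \<in> sets (sigma (perms E V) (FB E V B))"
    by (rule borel_measurable_vimage[OF assms(1)])
  ultimately have "f -` {f \<pi>} \<inter> perms E V \<in> sigma_sets (perms E V) (Fgen E V B)"
    by (simp add: FB_def sigma_sets_sigma_sets_eq[OF Fgen_sub])
  then have "\<pi> \<in> f -` {f \<pi>} \<inter> perms E V \<longleftrightarrow> \<pi>' \<in> f -` {f \<pi>} \<inter> perms E V"
    by (rule Fgen_sigma_sets_cong[OF _ assms(2-4)])
  then show ?thesis
    using assms(2) by auto
qed

lemma FB_event_oplus_perm:
  assumes "S \<in> FB E V A" "S \<subseteq> perms E V" "A \<subseteq> V"
    and "\<pi> \<in> S" "\<pi> ` A = A" "\<tau> \<in> perms E (V - A)"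
  shows "oplus_perm A (oplus_id A \<pi>) \<tau> \<in> S"
proof -
  let ?\<pi>' = "oplus_perm A (oplus_id A \<pi>) \<tau>"
  have \<pi>: "\<pi> \<in> perms E V"
    using assms(2,4) by auto
  have \<pi>': "?\<pi>' \<in> perms E V"
    using oplus_perm_perms oplus_id_perms_invariant(1) \<pi> assms(3,5,6) by blast
  have agree: "\<pi> x = ?\<pi>' x" if "x \<in> A" for x
    using that by (simp add: oplus_perm_def oplus_id_def)
  have "\<pi> \<in> S \<longleftrightarrow> ?\<pi>' \<in> S"
  proof (rule Fgen_sigma_sets_cong[OF assms(1)[unfolded FB_def] \<pi> \<pi>'])
    show "\<pi> x = ?\<pi>' x \<and> inv \<pi> x = inv ?\<pi>' x" if "x \<in> A" for x
      using agree inv_eq_on_invariant[OF perms_bij[OF \<pi>] perms_bij[OF \<pi>'] assms(5)] that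
      by blast
  qed
  with assms(4) show ?thesis by simp
qed

lemma FB_measurable_oplus_perm:
  fixes f :: "('a \<Rightarrow> 'a) \<Rightarrow> real"
  assumes "f \<in> borel_measurable (sigma (perms E V) (FB E V B))"
    and "B \<subseteq> V" "A \<subseteq> V" "A \<inter> B = {}" "\<sigma> \<in> perms E A" "\<tau> \<in> perms E (V - A)"
  shows "f (oplus_perm A \<sigma> \<tau>) = f \<tau>"
proof (rule FB_measurable_cong[OF assms(1)])
  show \<pi>: "oplus_perm A \<sigma> \<tau> \<in> perms E V"
    by (rule oplus_perm_perms[OF assms(3,5,6)])
  show \<tau>: "\<tau> \<in> perms E V"
    using oplus_perm_perms[OF assms(3) id_in_perms assms(6)] oplus_perm_id_left[OF assms(6)] by simp
  have \<tau>_inv: "\<tau> ` (V - A) = V - A"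
    using assms(6) unfolding perms_def bij_betw_def by auto
  have agree: "oplus_perm A \<sigma> \<tau> y = \<tau> y" if "y \<in> V - A" for y
    using that by (simp add: oplus_perm_def)
  fix x assume "x \<in> B"
  then have "x \<in> V - A"
    using assms(2,4) by auto
  then show "oplus_perm A \<sigma> \<tau> x = \<tau> x \<and> inv (oplus_perm A \<sigma> \<tau>) x = inv \<tau> x"
    using agree inv_eq_on_invariant[OF perms_bij[OF \<tau>] perms_bij[OF \<pi>] \<tau>_inv, of x]
    by simp
qed

lemma bij_betw_oplus_perm:
  assumes "S \<in> FB E V A" "S \<subseteq> perms E V" "A \<subseteq> V" "\<And>\<pi>. \<pi> \<in> S \<Longrightarrow> \<pi> ` A = A"
  shows "bij_betw (\<lambda>(\<sigma>, \<tau>). oplus_perm A \<sigma> \<tau>) (oplus_id A ` S \<times> perms E (V - A)) S"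
proof (rule bij_betw_byWitness[where f' = "\<lambda>\<pi>. (oplus_id A \<pi>, oplus_id (V - A) \<pi>)"])
  have left: "\<sigma> \<in> perms E A" if "\<sigma> \<in> oplus_id A ` S" for \<sigma>
    using that assms(2,3,4) oplus_id_perms_invariant(1)[of _ E V A] by blast
  show "\<forall>p\<in>oplus_id A ` S \<times> perms E (V - A).
      (\<lambda>\<pi>. (oplus_id A \<pi>, oplus_id (V - A) \<pi>)) ((\<lambda>(\<sigma>, \<tau>). oplus_perm A \<sigma> \<tau>) p) = p"
  proof
    fix p assume "p \<in> oplus_id A ` S \<times> perms E (V - A)"
    then obtain \<sigma> \<tau> where "p = (\<sigma>, \<tau>)" "\<sigma> \<in> perms E A" "\<tau> \<in> perms E (V - A)"
      using left by blast
    then show "(\<lambda>\<pi>. (oplus_id A \<pi>, oplus_id (V - A) \<pi>)) ((\<lambda>(\<sigma>, \<tau>). oplus_perm A \<sigma> \<tau>) p) = p"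
      by (simp add: oplus_id_oplus_perm_left oplus_id_oplus_perm_right)
  qed
  show "\<forall>\<pi>\<in>S. (\<lambda>(\<sigma>, \<tau>). oplus_perm A \<sigma> \<tau>) (oplus_id A \<pi>, oplus_id (V - A) \<pi>) = \<pi>"
    using assms(2,3) by (auto simp: oplus_perm_oplus_id)
  show "(\<lambda>(\<sigma>, \<tau>). oplus_perm A \<sigma> \<tau>) ` (oplus_id A ` S \<times> perms E (V - A)) \<subseteq> S"
    using FB_event_oplus_perm[OF assms(1-3)] assms(4) by auto
  show "(\<lambda>\<pi>. (oplus_id A \<pi>, oplus_id (V - A) \<pi>)) ` S \<subseteq> oplus_id A ` S \<times> perms E (V - A)"
    using assms(2,3,4) oplus_id_perms_invariant(2)[of _ E V A] by blast
qed

lemma sum_Pr_eq_Ex_complement: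
  fixes f :: "('a \<Rightarrow> 'a) \<Rightarrow> real"
  assumes "finite V" "B \<subseteq> V" "f \<in> borel_measurable (sigma (perms E V) (FB E V B))"
    and "A \<subseteq> V" "A \<inter> B = {}"
    and "S \<in> FB E V A" "S \<subseteq> perms E V" "\<And>\<pi>. \<pi> \<in> S \<Longrightarrow> \<pi> ` A = A"
  shows "(\<Sum>\<pi>\<in>S. f \<pi> * Pr \<alpha> E V \<pi>)
       = Ex \<alpha> E (V - A) (\<lambda>\<tau>. f (oplus_id (V - A) \<tau>)) * (\<Sum>\<pi>\<in>S. Pr \<alpha> E V \<pi>)"
proof -
  let ?T = "perms E (V - A)"
  let ?W = "\<Sum>\<sigma>\<in>oplus_id A ` S. weight \<alpha> A \<sigma>"
  have left: "\<sigma> \<in> perms E A" if "\<sigma> \<in> oplus_id A ` S" for \<sigma>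
    using that assms(4,7,8) oplus_id_perms_invariant(1)[of _ E V A] by blast
  have factor: "(\<Sum>\<pi>\<in>S. g \<pi> * Pr \<alpha> E V \<pi>)
      = ?W * (\<Sum>\<tau>\<in>?T. g \<tau> * weight \<alpha> (V - A) \<tau>) / Zc \<alpha> E V"
    if g: "\<And>\<sigma> \<tau>. \<sigma> \<in> perms E A \<Longrightarrow> \<tau> \<in> ?T \<Longrightarrow> g (oplus_perm A \<sigma> \<tau>) = g \<tau>"
    for g :: "('a \<Rightarrow> 'a) \<Rightarrow> real"
  proof -
    have "(\<Sum>\<pi>\<in>S. g \<pi> * Pr \<alpha> E V \<pi>)
        = (\<Sum>(\<sigma>, \<tau>)\<in>oplus_id A ` S \<times> ?T. g (oplus_perm A \<sigma> \<tau>) * Pr \<alpha> E V (oplus_perm A \<sigma> \<tau>))"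
      using sum.reindex_bij_betw[OF bij_betw_oplus_perm[OF assms(6,7,4,8)],
          of "\<lambda>\<pi>. g \<pi> * Pr \<alpha> E V \<pi>"]
      by (simp add: case_prod_beta')
    also have "\<dots> = (\<Sum>\<sigma>\<in>oplus_id A ` S. \<Sum>\<tau>\<in>?T.
        weight \<alpha> A \<sigma> * (g \<tau> * weight \<alpha> (V - A) \<tau>) / Zc \<alpha> E V)"
      unfolding sum.cartesian_product[symmetric] Pr_def weight_oplus_perm[OF assms(1,4)]
      by (intro sum.cong refl) (simp add: g left)
    also have "\<dots> = (\<Sum>\<sigma>\<in>oplus_id A ` S.
        weight \<alpha> A \<sigma> * (\<Sum>\<tau>\<in>?T. g \<tau> * weight \<alpha> (V - A) \<tau>)) / Zc \<alpha> E V"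
      by (simp only: sum_distrib_left sum_divide_distrib)
    also have "\<dots> = ?W * (\<Sum>\<tau>\<in>?T. g \<tau> * weight \<alpha> (V - A) \<tau>) / Zc \<alpha> E V"
      by (simp only: sum_distrib_right)
    finally show ?thesis .
  qed
  have "(\<Sum>\<pi>\<in>S. f \<pi> * Pr \<alpha> E V \<pi>)
      = ?W * (\<Sum>\<tau>\<in>?T. f \<tau> * weight \<alpha> (V - A) \<tau>) / Zc \<alpha> E V"
    by (rule factor) (rule FB_measurable_oplus_perm[OF assms(3,2,4,5)])
  moreover have "(\<Sum>\<pi>\<in>S. Pr \<alpha> E V \<pi>) = ?W * Zc \<alpha> E (V - A) / Zc \<alpha> E V"
    using factor[of "\<lambda>_. 1"] by (simp add: Zc_def)
  moreover have "Zc \<alpha> E (V - A) > 0"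
    using assms(1) by (simp add: Zc_pos)
  ultimately show ?thesis
    using assms(1) by (simp add: Ex_oplus_id)
qed

section \<open>The \<open>\<sigma>\<close>-algebra \<open>\<F>\<^sub>Q\<close> and conditional expectation\<close>

lemma FB_sigma_algebra: "sigma_algebra (perms E V) (FB E V A)"
  unfolding FB_def by (rule sigma_algebra_sigma_sets) (auto simp: Fgen_def)

lemma empty_in_FB: "{} \<in> FB E V A"
  unfolding FB_def by (rule sigma_sets.Empty)

lemma FB_Diff: "X \<in> FB E V A \<Longrightarrow> Y \<in> FB E V A \<Longrightarrow> X - Y \<in> FB E V A"
proof -
  interpret sigma_algebra "perms E V" "FB E V A"
    by (rule FB_sigma_algebra)
  show "X \<in> FB E V A \<Longrightarrow> Y \<in> FB E V A \<Longrightarrow> X - Y \<in> FB E V A"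
    by blast
qed

lemma FB_countable_UN:
  fixes X :: "nat \<Rightarrow> ('a \<Rightarrow> 'a) set"
  shows "range X \<subseteq> FB E V A \<Longrightarrow> (\<Union>i. X i) \<in> FB E V A"
  unfolding FB_def by (rule sigma_sets.Union) auto

lemma FQ_subset_Pow: "FQ E V Q \<subseteq> Pow (perms E V)"
  unfolding FQ_def by auto

lemma sigma_algebra_FQ:
  assumes "admissible E V Q"
  shows "sigma_algebra (perms E V) (FQ E V Q)"
  unfolding sigma_algebra_iff2
proof (intro conjI ballI allI impI)
  let ?QA = "\<lambda>A. {\<pi> \<in> perms E V. Q \<pi> = A}"
  show "FQ E V Q \<subseteq> Pow (perms E V)"
    by (rule FQ_subset_Pow)
  show "{} \<in> FQ E V Q"
    unfolding FQ_def using empty_in_FB by auto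
  show "perms E V - R \<in> FQ E V Q" if "R \<in> FQ E V Q" for R
    unfolding FQ_def
  proof (intro CollectI conjI allI impI)
    fix A assume "A \<subseteq> V"
    then have "?QA A \<in> FB E V A" "R \<inter> ?QA A \<in> FB E V A"
      using assms \<open>R \<in> FQ E V Q\<close> unfolding admissible_def FQ_def by auto
    then have "?QA A - R \<inter> ?QA A \<in> FB E V A"
      by (rule FB_Diff)
    moreover have "(perms E V - R) \<inter> ?QA A = ?QA A - R \<inter> ?QA A"
      by auto
    ultimately show "(perms E V - R) \<inter> ?QA A \<in> FB E V A"
      by simp
  qed auto
  show "(\<Union>i. R i) \<in> FQ E V Q" if "range R \<subseteq> FQ E V Q" for R :: "nat \<Rightarrow> _"
    unfolding FQ_def
  proof (intro CollectI conjI allI impI)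
    show "(\<Union>i. R i) \<subseteq> perms E V"
      using that unfolding FQ_def by auto
    fix A assume "A \<subseteq> V"
    then have "range (\<lambda>i. R i \<inter> ?QA A) \<subseteq> FB E V A"
      using that unfolding FQ_def by auto
    then have "(\<Union>i. R i \<inter> ?QA A) \<in> FB E V A"
      by (rule FB_countable_UN)
    then show "(\<Union>i. R i) \<inter> ?QA A \<in> FB E V A"
      by (simp add: Int_UN_distrib2)
  qed
qed

lemma space_sigma_FQ: "space (sigma (perms E V) (FQ E V Q)) = perms E V"
  by (rule space_measure_of[OF FQ_subset_Pow])

lemma sets_sigma_FQ:
  "admissible E V Q \<Longrightarrow> sets (sigma (perms E V) (FQ E V Q)) = FQ E V Q"
  by (simp add: sets_measure_of[OF FQ_subset_Pow] sigma_algebra.sigma_sets_eq sigma_algebra_FQ)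

lemma FQ_vimage:
  assumes "admissible E V Q"
  shows "{\<pi> \<in> perms E V. Q \<pi> \<in> \<A>} \<in> FQ E V Q"
  unfolding FQ_def
proof (intro CollectI conjI allI impI)
  fix A assume "A \<subseteq> V"
  have "{\<pi> \<in> perms E V. Q \<pi> \<in> \<A>} \<inter> {\<pi> \<in> perms E V. Q \<pi> = A}
      = (if A \<in> \<A> then {\<pi> \<in> perms E V. Q \<pi> = A} else {})"
    by auto
  then show "{\<pi> \<in> perms E V. Q \<pi> \<in> \<A>} \<inter> {\<pi> \<in> perms E V. Q \<pi> = A} \<in> FB E V A"
    using assms \<open>A \<subseteq> V\<close> empty_in_FB
    unfolding admissible_def by auto
qed auto

lemma measurable_FQ_comp:
  fixes h :: "'a set \<Rightarrow> real"
  assumes "admissible E V Q"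
  shows "(\<lambda>\<pi>. h (Q \<pi>)) \<in> borel_measurable (sigma (perms E V) (FQ E V Q))"
proof (rule measurableI)
  fix X :: "real set"
  have "(\<lambda>\<pi>. h (Q \<pi>)) -` X \<inter> perms E V = {\<pi> \<in> perms E V. Q \<pi> \<in> {A. h A \<in> X}}"
    by auto
  then show "(\<lambda>\<pi>. h (Q \<pi>)) -` X \<inter> space (sigma (perms E V) (FQ E V Q))
      \<in> sets (sigma (perms E V) (FQ E V Q))"
    using FQ_vimage[OF assms, of "{A. h A \<in> X}"]
    by (simp add: space_sigma_FQ sets_sigma_FQ[OF assms])
qed simp

lemma integrable_PV:
  fixes g :: "('a \<Rightarrow> 'a) \<Rightarrow> real"
  shows "finite V \<Longrightarrow> integrable (PV \<alpha> E V) g"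
  unfolding PV_def by (rule integrable_point_measure_finite) (simp add: finite_perms)

lemma set_integral_PV:
  fixes h :: "('a \<Rightarrow> 'a) \<Rightarrow> real"
  assumes "finite V" "S \<subseteq> perms E V"
  shows "(\<integral>\<pi>\<in>S. h \<pi> \<partial>PV \<alpha> E V) = (\<Sum>\<pi>\<in>S. Pr \<alpha> E V \<pi> * h \<pi>)"
proof -
  have "(\<integral>\<pi>\<in>S. h \<pi> \<partial>PV \<alpha> E V)
      = (\<Sum>\<pi>\<in>perms E V. Pr \<alpha> E V \<pi> *\<^sub>R (indicator S \<pi> *\<^sub>R h \<pi>))"
    unfolding set_lebesgue_integral_def PV_def
    by (rule lebesgue_integral_point_measure_finite) (auto simp: finite_perms assms Pr_nonneg)
  also have "\<dots> = (\<Sum>\<pi>\<in>S. Pr \<alpha> E V \<pi> * h \<pi>)"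
    by (rule sum.mono_neutral_cong_right) (use assms in \<open>auto simp: finite_perms\<close>)
  finally show ?thesis .
qed

lemma finite_measure_subalgebra_FQ:
  assumes "finite V"
  shows "finite_measure_subalgebra (PV \<alpha> E V) (sigma (perms E V) (FQ E V Q))"
proof -
  have "finite_measure (PV \<alpha> E V)"
    unfolding PV_def using assms
    by (intro finite_measureI) (simp add: space_point_measure emeasure_point_measure_finite finite_perms)
  moreover have "subalgebra (PV \<alpha> E V) (sigma (perms E V) (FQ E V Q))"
    unfolding subalgebra_def space_sigma_FQ sets_measure_of[OF FQ_subset_Pow]
    using sigma_sets_into_sp[OF FQ_subset_Pow[of E V Q]]
    by (auto simp: PV_def space_point_measure sets_point_measure)
  ultimately show ?thesis
    by (simp add: finite_measure_subalgebra_def finite_measure_subalgebra_axioms_def)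
qed

lemma sum_Pr_FQ_event:
  fixes f :: "('a \<Rightarrow> 'a) \<Rightarrow> real"
  assumes "finite V" "admissible E V Q" "B \<subseteq> V"
    and "f \<in> borel_measurable (sigma (perms E V) (FB E V B))" and "S \<in> FQ E V Q"
  shows "(\<Sum>\<pi>\<in>S. Pr \<alpha> E V \<pi> * (f \<pi> * indicator {\<sigma>. Q \<sigma> \<inter> B = {}} \<pi>))
       = (\<Sum>\<pi>\<in>S. Pr \<alpha> E V \<pi> *
            (Ex \<alpha> E (V - Q \<pi>) (\<lambda>\<tau>. f (oplus_id (V - Q \<pi>) \<tau>)) * indicator {\<sigma>. Q \<sigma> \<inter> B = {}} \<pi>))"
    (is "(\<Sum>\<pi>\<in>S. ?lhs \<pi>) = (\<Sum>\<pi>\<in>S. ?rhs \<pi>)")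
proof -
  let ?Ex = "\<lambda>A. Ex \<alpha> E (V - A) (\<lambda>\<tau>. f (oplus_id (V - A) \<tau>))"
  have S: "S \<subseteq> perms E V"
    using assms(5) unfolding FQ_def by auto
  have fin: "finite S"
    using finite_subset[OF S finite_perms[OF assms(1)]] .
  have fibre: "(\<Sum>\<pi>\<in>{\<pi> \<in> S. Q \<pi> = A}. ?lhs \<pi>) = (\<Sum>\<pi>\<in>{\<pi> \<in> S. Q \<pi> = A}. ?rhs \<pi>)"
    if "A \<in> Q ` S" for A
  proof (cases "A \<inter> B = {}")
    case True
    have AV: "A \<subseteq> V"
      using that S assms(2) unfolding admissible_def by auto
    have "{\<pi> \<in> S. Q \<pi> = A} = S \<inter> {\<pi> \<in> perms E V. Q \<pi> = A}"
      using S by auto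
    then have SA: "{\<pi> \<in> S. Q \<pi> = A} \<in> FB E V A"
      using assms(5) AV unfolding FQ_def by auto
    have inv: "\<pi> ` A = A" if "\<pi> \<in> {\<pi> \<in> S. Q \<pi> = A}" for \<pi>
    proof -
      have "\<pi> \<in> perms E V" "Q \<pi> = A"
        using that S by auto
      moreover from this have "\<pi> ` Q \<pi> = Q \<pi>"
        using assms(2) unfolding admissible_def by blast
      ultimately show ?thesis by simp
    qed
    have "(\<Sum>\<pi>\<in>{\<pi> \<in> S. Q \<pi> = A}. ?lhs \<pi>) = (\<Sum>\<pi>\<in>{\<pi> \<in> S. Q \<pi> = A}. f \<pi> * Pr \<alpha> E V \<pi>)"
      using True by (intro sum.cong) auto
    also have "\<dots> = ?Ex A * (\<Sum>\<pi>\<in>{\<pi> \<in> S. Q \<pi> = A}. Pr \<alpha> E V \<pi>)"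
      by (rule sum_Pr_eq_Ex_complement[OF assms(1,3,4) AV True SA _ inv]) (use S in auto)
    also have "\<dots> = (\<Sum>\<pi>\<in>{\<pi> \<in> S. Q \<pi> = A}. ?rhs \<pi>)"
      using True by (auto simp: sum_distrib_left intro!: sum.cong)
    finally show ?thesis .
  next
    case False
    then show ?thesis
      by (intro sum.cong) auto
  qed
  have "(\<Sum>\<pi>\<in>S. ?lhs \<pi>) = (\<Sum>A\<in>Q ` S. \<Sum>\<pi>\<in>{\<pi> \<in> S. Q \<pi> = A}. ?lhs \<pi>)"
    by (rule sum.image_gen[OF fin])
  also have "\<dots> = (\<Sum>A\<in>Q ` S. \<Sum>\<pi>\<in>{\<pi> \<in> S. Q \<pi> = A}. ?rhs \<pi>)"
    by (rule sum.cong[OF refl fibre])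
  also have "\<dots> = (\<Sum>\<pi>\<in>S. ?rhs \<pi>)"
    by (rule sum.image_gen[OF fin, symmetric])
  finally show ?thesis .
qed

lemma real_cond_exp_FQ:
  fixes f :: "('a \<Rightarrow> 'a) \<Rightarrow> real"
  assumes "finite V" "admissible E V Q" "B \<subseteq> V"
    and "f \<in> borel_measurable (sigma (perms E V) (FB E V B))"
  shows "AE \<pi> in PV \<alpha> E V.
    real_cond_exp (PV \<alpha> E V) (sigma (perms E V) (FQ E V Q))
      (\<lambda>\<sigma>. f \<sigma> * indicator {\<sigma>. Q \<sigma> \<inter> B = {}} \<sigma>) \<pi>
    = Ex \<alpha> E (V - Q \<pi>) (\<lambda>\<tau>. f (oplus_id (V - Q \<pi>) \<tau>)) * indicator {\<sigma>. Q \<sigma> \<inter> B = {}} \<pi>"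
proof -
  interpret finite_measure_subalgebra "PV \<alpha> E V" "sigma (perms E V) (FQ E V Q)"
    by (rule finite_measure_subalgebra_FQ[OF assms(1)])
  have measurable: "(\<lambda>\<pi>. Ex \<alpha> E (V - Q \<pi>) (\<lambda>\<tau>. f (oplus_id (V - Q \<pi>) \<tau>))
      * indicator {\<sigma>. Q \<sigma> \<inter> B = {}} \<pi>) \<in> borel_measurable (sigma (perms E V) (FQ E V Q))"
    using measurable_FQ_comp[OF assms(2), of "\<lambda>A. Ex \<alpha> E (V - A) (\<lambda>\<tau>. f (oplus_id (V - A) \<tau>))
      * of_bool (A \<inter> B = {})"]
    by (simp add: indicator_def)
  show ?thesis
  proof (rule real_cond_exp_charact[OF _ integrable_PV[OF assms(1)] integrable_PV[OF assms(1)] measurable])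
    fix S assume "S \<in> sets (sigma (perms E V) (FQ E V Q))"
    then have "S \<in> FQ E V Q"
      by (simp add: sets_sigma_FQ[OF assms(2)])
    moreover from this have "S \<subseteq> perms E V"
      using FQ_subset_Pow by blast
    ultimately show "(\<integral>\<pi>\<in>S. f \<pi> * indicator {\<sigma>. Q \<sigma> \<inter> B = {}} \<pi> \<partial>PV \<alpha> E V)
        = (\<integral>\<pi>\<in>S. Ex \<alpha> E (V - Q \<pi>) (\<lambda>\<tau>. f (oplus_id (V - Q \<pi>) \<tau>))
            * indicator {\<sigma>. Q \<sigma> \<inter> B = {}} \<pi> \<partial>PV \<alpha> E V)"
      using sum_Pr_FQ_event[OF assms] by (simp add: set_integral_PV[OF assms(1)])
  qed
qed

theorem proposition4p2:
  fixes V :: "'a set" and E :: "'a set set" and \<alpha> :: real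
    and Q :: "('a \<Rightarrow> 'a) \<Rightarrow> 'a set" and B :: "'a set"
    and f :: "('a \<Rightarrow> 'a) \<Rightarrow> real"
  assumes "finite_graph V E"
    and "admissible E V Q"
    and "B \<subseteq> V"
    and "f \<in> borel_measurable (sigma (perms E V) (FB E V B))"
  shows "AE \<pi> in PV \<alpha> E V.
     real_cond_exp (PV \<alpha> E V) (sigma (perms E V) (FQ E V Q)) f \<pi>
        * indicator {\<sigma>. Q \<sigma> \<inter> B = {}} \<pi>
       = real_cond_exp (PV \<alpha> E V) (sigma (perms E V) (FQ E V Q))
           (\<lambda>\<sigma>. f \<sigma> * indicator {\<sigma>. Q \<sigma> \<inter> B = {}} \<sigma>) \<pi>
     \<and> real_cond_exp (PV \<alpha> E V) (sigma (perms E V) (FQ E V Q))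
           (\<lambda>\<sigma>. f \<sigma> * indicator {\<sigma>. Q \<sigma> \<inter> B = {}} \<sigma>) \<pi>
       = Ex \<alpha> E (V - Q \<pi>) (\<lambda>\<tau>. f (oplus_id (V - Q \<pi>) \<tau>))
           * indicator {\<sigma>. Q \<sigma> \<inter> B = {}} \<pi>"
proof -
  have fin: "finite V"
    using assms(1) by (simp add: finite_graph_def)
  interpret finite_measure_subalgebra "PV \<alpha> E V" "sigma (perms E V) (FQ E V Q)"
    by (rule finite_measure_subalgebra_FQ[OF fin])
  have "(indicator {\<sigma>. Q \<sigma> \<inter> B = {}} :: _ \<Rightarrow> real)
      \<in> borel_measurable (sigma (perms E V) (FQ E V Q))"
    using measurable_FQ_comp[OF assms(2), of "\<lambda>A. of_bool (A \<inter> B = {})"]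
    by (simp add: indicator_def[abs_def])
  then have "AE \<pi> in PV \<alpha> E V.
      real_cond_exp (PV \<alpha> E V) (sigma (perms E V) (FQ E V Q))
        (\<lambda>\<sigma>. indicator {\<sigma>. Q \<sigma> \<inter> B = {}} \<sigma> * f \<sigma>) \<pi>
      = indicator {\<sigma>. Q \<sigma> \<inter> B = {}} \<pi> * real_cond_exp (PV \<alpha> E V) (sigma (perms E V) (FQ E V Q)) f \<pi>"
    by (rule real_cond_exp_mult[OF _ _ integrable_PV[OF fin]]) (simp add: PV_def)
  moreover note real_cond_exp_FQ[OF fin assms(2-4)]
  ultimately show ?thesis
    by eventually_elim (simp only: mult.commute)
qed

end
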